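(* Consider the IPD process on $G=\mathbb{S}_d^n$ with $d>15$. Let $G'$ be an arbitrary star of $G$ with root $0$, leaves $1,\dots,d$, where $1,2$ are the external vertices. Let $M'>0$ and let $g_0,g_1,g_2$ be increasing (integer-valued) functions of $d$ with $g_2(d)=d/3-2$ and $1<g_0(d)<g_1(d)<g_2(d)$ for all $d$. Suppose the initial configuration is such that on $G'$ leaves $3,\dots,d-g_1$ are $\mathrm{C}$ and leaves $d-g_1+1,\dots,d$ are $\mathrm{D}$, while the states of all other vertices (including the root $0$ and the external vertices $1,2$ of $G'$) are arbitrary. Let $N_{\mathrm{D}}=|\{i\in\{3,\dots,d\}: A(i)=\mathrm{D}\}|$ and, for an integer $g$, let $T_g$ be the first time at which $N_{\mathrm{D}}=g$. Set $\Delta_2=g_2-g_1$, $\Delta_1=g_1-g_0$, $\rho=\sqrt{9/8}$, $\mu=g_0M'$. Then $$\mathbb{P}[T_{g_2}\ge T_{g_0}\wedge M']\le 2^{-\Delta_1}+\rho^{-\sqrt{\mu}/2}(\sqrt2)^{\Delta_2}+2^{-\mu/2}.$$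
   Context: IPD process on a finite graph: each vertex has an action in $\{\mathrm{C},\mathrm{D}\}$; each edge carries an independent rate-1 Poisson clock; when the clock of $(u,v)$ rings, $(A(u),A(v))$ is updated by $(\mathrm{C},\mathrm{C})\to(\mathrm{C},\mathrm{C})$, $(\mathrm{C},\mathrm{D})\to(\mathrm{D},\mathrm{D})$, $(\mathrm{D},\mathrm{C})\to(\mathrm{D},\mathrm{D})$, $(\mathrm{D},\mathrm{D})\to(\mathrm{C},\mathrm{C})$. $\mathbb{S}_d^n$ is the $(n,d)$-caterpillar: a tree whose internal vertices induce a path of $n$ vertices each of degree $d$; it is a chain of $n$ stars with $d$ leaves each, consecutive stars sharing one leaf edge. For a star of $\mathbb{S}_d^n$, the external vertices $1,2$ are the two leaves it shares with its neighbouring stars (for an extremal star, the one shared leaf and one arbitrary other leaf). $a\wedge b=\min\{a,b\}$. Time is continuous. *)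

theory Defs
  imports "HOL-Probability.Probability"
begin

datatype act = Cop | Def

fun ipd_rule :: "act \<times> act \<Rightarrow> act \<times> act" where
  "ipd_rule (Cop, Cop) = (Cop, Cop)"
| "ipd_rule (Cop, Def) = (Def, Def)"
| "ipd_rule (Def, Cop) = (Def, Def)"
| "ipd_rule (Def, Def) = (Cop, Cop)"

type_synonym vert = "nat \<times> nat"
type_synonym config = "vert \<Rightarrow> act"

definition ipd_update :: "config \<Rightarrow> vert \<times> vert \<Rightarrow> config" where
  "ipd_update A e = (case e of (u, v) \<Rightarrow>
     (case ipd_rule (A u, A v) of (a, b) \<Rightarrow> A(u := a, v := b)))"

text \<open>Spine (internal) vertices are (i,0) for i < n; vertex (i,0) has
  pend n d i pendant leaves (i,j), 1 <= j <= pend n d i, so that every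
  internal vertex has degree d.\<close>

definition pend :: "nat \<Rightarrow> nat \<Rightarrow> nat \<Rightarrow> nat" where
  "pend n d i = (if n = 1 then d else if i = 0 \<or> i = n - 1 then d - 1 else d - 2)"

definition cat_edges :: "nat \<Rightarrow> nat \<Rightarrow> (vert \<times> vert) set" where
  "cat_edges n d =
     {((i, 0), (i + 1, 0)) | i. i + 1 < n}
   \<union> {((i, 0), (i, j)) | i j. i < n \<and> 1 \<le> j \<and> j \<le> pend n d i}"

definition nbrs :: "(vert \<times> vert) set \<Rightarrow> vert \<Rightarrow> vert set" where
  "nbrs E v = {u. (v, u) \<in> E \<or> (u, v) \<in> E}"

text \<open>Superposition of the independent rate-1 edge clocks: the rings form a
  Poisson process of rate |E| (i.i.d. Exp(|E|) gaps) and each ring is at an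
  independently, uniformly chosen edge.\<close>

definition ipd_space :: "(vert \<times> vert) set \<Rightarrow> (nat \<Rightarrow> (vert \<times> vert) \<times> real) measure" where
  "ipd_space E = PiM UNIV (\<lambda>_. measure_pmf (pmf_of_set E)
       \<Otimes>\<^sub>M density lborel (exponential_density (real (card E))))"

fun jump :: "config \<Rightarrow> (nat \<Rightarrow> (vert \<times> vert) \<times> real) \<Rightarrow> nat \<Rightarrow> config" where
  "jump A0 \<omega> 0 = A0"
| "jump A0 \<omega> (Suc k) = ipd_update (jump A0 \<omega> k) (fst (\<omega> k))"

definition jump_time :: "(nat \<Rightarrow> (vert \<times> vert) \<times> real) \<Rightarrow> nat \<Rightarrow> real" where
  "jump_time \<omega> k = (\<Sum>j<k. snd (\<omega> j))"

definition ipd_state :: "config \<Rightarrow> (nat \<Rightarrow> (vert \<times> vert) \<times> real) \<Rightarrow> real \<Rightarrow> config" where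
  "ipd_state A0 \<omega> t = jump A0 \<omega> (card {k. 1 \<le> k \<and> jump_time \<omega> k \<le> t})"

text \<open>First time (infinity if never) at which the observable f equals g.\<close>
definition hit_time :: "(config \<Rightarrow> nat) \<Rightarrow> nat \<Rightarrow> (real \<Rightarrow> config) \<Rightarrow> ennreal" where
  "hit_time f g X = (INF t \<in> {t. 0 \<le> t \<and> f (X t) = g}. ennreal t)"

end

theory Submission
  imports Defs
begin

(*
  Only the embedded jump chain of the process matters, and along it the number N_D of defecting
  inner leaves of the star moves up by at most one per ring. Started at g1, strictly between g0
  and g2, the chain can fail to reach g2 before min (T g0) M' only by leaving the window
  (g0, g2) downwards, by leaving it upwards after time M', or by never leaving it.

  Each of these is bounded by a Lyapunov argument on the product space of i.i.d. (uniform edge,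
  exponential gap) marks. The function 2^-(N_D - g0) is superharmonic inside the window, which
  gives 2^-(g1 - g0) for the first event. The potential (17/16 if the root cooperates, else 1)
  times (4/3)^(g2 - N_D) decreases at rate g0/17 inside the window; hence the exponential moment
  E[exp (g0/17 * tau); exit above] is at most 17/16 (4/3)^(g2 - g1), Markov's inequality bounds
  the second event, and never leaving is a null event. Elementary estimates turn
  17/16 (4/3)^(g2 - g1) exp (- g0 M'/17) into the rho-term of the statement whenever the latter
  is below 1.
*)

lemma nn_integral_exp_exponential_density:
  fixes b c :: real
  assumes "0 < c" "b < c"
  shows "(\<integral>\<^sup>+ g. ennreal (exp (b * g)) \<partial>density lborel (exponential_density c)) = ennreal (c / (c - b))"
proof -
  have cb: "0 < c - b" using assms by simp
  interpret D: prob_space "density lborel (exponential_density (c - b))"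
    by (rule prob_space_exponential_density[OF cb])
  have density_one: "(\<integral>\<^sup>+ g. ennreal (exponential_density (c - b) g) \<partial>lborel) = 1"
    using D.emeasure_space_1 by (simp add: emeasure_density)
  have tilt: "ennreal (exponential_density c g) * ennreal (exp (b * g))
      = ennreal (c / (c - b)) * ennreal (exponential_density (c - b) g)" for g
  proof (cases "g < 0")
    case False
    have "exp (- g * c) * exp (b * g) = exp (- g * (c - b))"
      by (simp add: exp_add[symmetric] algebra_simps)
    then have "c * exp (- g * c) * exp (b * g) = c / (c - b) * ((c - b) * exp (- g * (c - b)))"
      using cb by (simp add: field_simps)
    then show ?thesis
      using False assms cb by (simp add: exponential_density_def ennreal_mult[symmetric])
  qed (simp add: exponential_density_def)
  have "(\<integral>\<^sup>+ g. ennreal (exp (b * g)) \<partial>density lborel (exponential_density c))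
      = (\<integral>\<^sup>+ g. ennreal (c / (c - b)) * ennreal (exponential_density (c - b) g) \<partial>lborel)"
    by (subst nn_integral_density) (auto simp: tilt)
  also have "\<dots> = ennreal (c / (c - b))"
    by (subst nn_integral_cmult) (auto simp: density_one)
  finally show ?thesis .
qed

lemma nn_integral_Markov_measure_le:
  fixes f :: "'a \<Rightarrow> ennreal"
  assumes "finite_measure M" "f \<in> borel_measurable M" "0 < a" "0 \<le> y"
    and "(\<integral>\<^sup>+ x. f x \<partial>M) \<le> ennreal y"
  shows "measure M {x \<in> space M. ennreal a \<le> f x} \<le> y / a"
proof -
  interpret finite_measure M by fact
  let ?A = "{x \<in> space M. ennreal a \<le> f x}"
  have A: "?A \<in> sets M" using assms(2) by measurable
  have "ennreal (measure M ?A * a) = ennreal a * emeasure M ?A"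
    using assms(3) by (simp add: emeasure_eq_measure ennreal_mult mult.commute)
  also have "\<dots> = (\<integral>\<^sup>+ x. ennreal a * indicator ?A x \<partial>M)"
    using A by (simp add: nn_integral_cmult_indicator)
  also have "\<dots> \<le> (\<integral>\<^sup>+ x. f x \<partial>M)"
    by (intro nn_integral_mono) (auto simp: indicator_def)
  also have "\<dots> \<le> ennreal y" by fact
  finally have "measure M ?A * a \<le> y"
    using assms(4) by (simp add: ennreal_le_iff)
  then show ?thesis using assms(3) by (simp add: pos_le_divide_eq)
qed

lemma (in finite_measure) measure_UN_incseq_le:
  assumes "range A \<subseteq> sets M" "incseq A" "\<And>k. measure M (A k) \<le> y"
  shows "measure M (\<Union>k. A k) \<le> y"
  using finite_Lim_measure_incseq[OF assms(1,2)] by (rule LIMSEQ_le_const2) (use assms(3) in auto)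

section \<open>The jump chain and hitting times\<close>

lemma ipd_update_eq:
  "ipd_update A (u, v) = A(u := (if A u = A v then Cop else Def), v := (if A u = A v then Cop else Def))"
  by (cases "A u"; cases "A v") (simp_all add: ipd_update_def)

lemma act_not_Def: "a \<noteq> Def \<longleftrightarrow> a = Cop"
  by (cases a) simp_all

lemma ipd_update_swap: "ipd_update A (u, v) = ipd_update A (v, u)"
  unfolding ipd_update_eq by (auto simp: fun_eq_iff)

type_synonym ipd_path = "nat \<Rightarrow> (vert \<times> vert) \<times> real"

definition shift_path :: "ipd_path \<Rightarrow> ipd_path" where
  "shift_path \<omega> = (\<lambda>k. \<omega> (Suc k))"

lemma shift_path_apply: "shift_path \<omega> k = \<omega> (Suc k)"
  by (simp add: shift_path_def)

lemma shift_path_case_nat [simp]: "shift_path (case_nat x \<omega>) = \<omega>"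
  by (simp add: shift_path_def)

lemma jump_Suc_shift_path:
  "jump A \<omega> (Suc m) = jump (ipd_update A (fst (\<omega> 0))) (shift_path \<omega>) m"
  by (induction m) (simp_all add: shift_path_def)

lemma strict_mono_jump_time:
  assumes "\<And>k. 0 < snd (\<omega> k)"
  shows "strict_mono (jump_time \<omega>)"
  unfolding strict_mono_Suc_iff jump_time_def using assms by simp

lemma jump_time_nonneg:
  assumes "\<And>k. 0 < snd (\<omega> k)"
  shows "0 \<le> jump_time \<omega> m"
  unfolding jump_time_def using assms by (intro sum_nonneg) (simp add: less_imp_le)

lemma ipd_state_jump_time:
  assumes "\<And>k. 0 < snd (\<omega> k)"
  shows "ipd_state A0 \<omega> (jump_time \<omega> m) = jump A0 \<omega> m"
proof -
  have "{k. 1 \<le> k \<and> jump_time \<omega> k \<le> jump_time \<omega> m} = {1..m}"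
    using strict_mono_less_eq[OF strict_mono_jump_time[OF assms]] by auto
  then show ?thesis by (simp add: ipd_state_def)
qed

lemma ipd_state_cases:
  assumes "\<And>k. 0 < snd (\<omega> k)"
  obtains m where "ipd_state A0 \<omega> t = jump A0 \<omega> m" "m = 0 \<or> jump_time \<omega> m \<le> t"
proof -
  define K where "K = {k. 1 \<le> k \<and> jump_time \<omega> k \<le> t}"
  show ?thesis
  proof (cases "finite K \<and> K \<noteq> {}")
    case False
    \<comment> \<open>this includes explosion, where the infinite K has card 0\<close>
    then have "card K = 0" by auto
    then show ?thesis using that[of 0] by (simp add: ipd_state_def K_def)
  next
    case True
    then have max_in: "Max K \<in> K" by simp
    have "K = {1..Max K}"
    proof
      show "K \<subseteq> {1..Max K}" using True by (auto simp: K_def)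
      show "{1..Max K} \<subseteq> K"
      proof
        fix j assume j: "j \<in> {1..Max K}"
        then have "jump_time \<omega> j \<le> jump_time \<omega> (Max K)"
          using strict_mono_less_eq[OF strict_mono_jump_time[OF assms]] by simp
        also have "\<dots> \<le> t" using max_in by (simp add: K_def)
        finally show "j \<in> K" using j by (simp add: K_def)
      qed
    qed
    then have "card K = Max K" by (metis card_atLeastAtMost diff_Suc_1)
    then show ?thesis using that[of "card K"] max_in by (simp add: ipd_state_def K_def)
  qed
qed

lemma hit_time_le_jump_time:
  assumes "\<And>k. 0 < snd (\<omega> k)" "F (jump A0 \<omega> m) = g"
  shows "hit_time F g (ipd_state A0 \<omega>) \<le> ennreal (jump_time \<omega> m)"
  unfolding hit_time_def
  using assms jump_time_nonneg[OF assms(1)] by (intro INF_lower) (simp add: ipd_state_jump_time)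

lemma jump_time_le_hit_time:
  assumes pos: "\<And>k. 0 < snd (\<omega> k)" and "0 < n" and before: "\<And>m. F (jump A0 \<omega> m) = g \<Longrightarrow> n \<le> m"
  shows "ennreal (jump_time \<omega> n) \<le> hit_time F g (ipd_state A0 \<omega>)"
  unfolding hit_time_def
proof (rule INF_greatest)
  fix t assume "t \<in> {t. 0 \<le> t \<and> F (ipd_state A0 \<omega> t) = g}"
  then have t: "F (ipd_state A0 \<omega> t) = g" by simp
  obtain m where m: "ipd_state A0 \<omega> t = jump A0 \<omega> m" "m = 0 \<or> jump_time \<omega> m \<le> t"
    using ipd_state_cases[OF pos] .
  have "n \<le> m" using before t m(1) by simp
  then have "jump_time \<omega> n \<le> jump_time \<omega> m"
    using strict_mono_less_eq[OF strict_mono_jump_time[OF pos]] by simp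
  moreover have "jump_time \<omega> m \<le> t" using m(2) \<open>0 < n\<close> \<open>n \<le> m\<close> by auto
  ultimately show "ennreal (jump_time \<omega> n) \<le> ennreal t" by (intro ennreal_leI) simp
qed

section \<open>The path space\<close>

locale ipd_clock =
  fixes E :: "(vert \<times> vert) set"
  assumes finite_E: "finite E" and E_nonempty: "E \<noteq> {}"
begin

abbreviation rate :: real where
  "rate \<equiv> real (card E)"

abbreviation holding :: "real measure" where
  "holding \<equiv> density lborel (exponential_density rate)"

definition mark :: "((vert \<times> vert) \<times> real) measure" where
  "mark = measure_pmf (pmf_of_set E) \<Otimes>\<^sub>M holding"

abbreviation paths :: "ipd_path measure" where
  "paths \<equiv> PiM UNIV (\<lambda>_. mark)"

lemma rate_pos: "0 < rate"
  using finite_E E_nonempty by (simp add: card_gt_0_iff)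

lemma prob_space_holding: "prob_space holding"
  by (rule prob_space_exponential_density[OF rate_pos])

sublocale marks: pair_prob_space "measure_pmf (pmf_of_set E)" holding
  by (auto simp: pair_prob_space_def pair_sigma_finite_def
      intro!: prob_space_imp_sigma_finite prob_space_measure_pmf prob_space_holding)

lemma prob_space_mark: "prob_space mark"
  unfolding mark_def by (rule marks.P.prob_space_axioms)

sublocale paths: sequence_space mark
  using prob_space_mark
  by (simp add: sequence_space_def product_prob_space_def product_prob_space_axioms_def
      product_sigma_finite_def prob_space_imp_sigma_finite)

lemma space_paths: "space paths = UNIV"
  by (simp add: space_PiM mark_def space_pair_measure)

lemma ipd_space_eq_paths: "ipd_space E = paths"
  by (simp add: ipd_space_def mark_def)

lemma measurable_mark_component [measurable]: "(\<lambda>\<omega>. \<omega> k) \<in> paths \<rightarrow>\<^sub>M mark"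
  using measurable_component_singleton[of k UNIV "\<lambda>_. mark"] by simp

lemma measurable_mark_edge [measurable]: "(\<lambda>\<omega>. fst (\<omega> k)) \<in> paths \<rightarrow>\<^sub>M count_space UNIV"
proof -
  have "fst \<in> mark \<rightarrow>\<^sub>M count_space UNIV"
    unfolding mark_def by (rule measurable_fst'', rule measurable_ident_sets) simp
  then show ?thesis by (rule measurable_compose[OF measurable_mark_component])
qed

lemma measurable_mark_gap [measurable]: "(\<lambda>\<omega>. snd (\<omega> k)) \<in> borel_measurable paths"
proof -
  have "snd \<in> borel_measurable mark"
    unfolding mark_def by (rule measurable_snd'', rule measurable_ident_sets) simp
  then show ?thesis by (rule measurable_compose[OF measurable_mark_component])
qed

(* Not declared [measurable]: as a map from paths to paths it would send the measurability
   prover into a loop. *)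
lemma measurable_shift_path: "shift_path \<in> paths \<rightarrow>\<^sub>M paths"
  unfolding shift_path_def by (rule measurable_PiM_single') (auto simp: space_PiM)

lemma measurable_jump [measurable]: "(\<lambda>\<omega>. jump A \<omega> m) \<in> paths \<rightarrow>\<^sub>M count_space UNIV"
proof (induction m arbitrary: A)
  case (Suc m)
  have "(\<lambda>\<omega>. jump (ipd_update A e) (shift_path \<omega>) m) \<in> paths \<rightarrow>\<^sub>M count_space UNIV" for e
    using measurable_compose[OF measurable_shift_path Suc.IH] .
  then have "(\<lambda>\<omega>. jump (ipd_update A (fst (\<omega> 0))) (shift_path \<omega>) m) \<in> paths \<rightarrow>\<^sub>M count_space UNIV"
    by (rule measurable_compose_countable[OF _ measurable_mark_edge])
  then show ?case by (simp only: jump_Suc_shift_path)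
qed simp

lemma measurable_jump_time [measurable]: "(\<lambda>\<omega>. jump_time \<omega> m) \<in> borel_measurable paths"
  unfolding jump_time_def by (intro borel_measurable_sum measurable_mark_gap)

lemma AE_paths_valid: "AE \<omega> in paths. \<forall>k. fst (\<omega> k) \<in> E \<and> 0 < snd (\<omega> k)"
proof -
  have "AE y in holding. 0 < y"
    using AE_lborel_singleton[of 0]
    by (subst AE_density) (auto simp: exponential_density_def elim!: eventually_mono split: if_splits)
  then have "AE x in mark. fst x \<in> E \<and> 0 < snd x"
    unfolding mark_def
    by (intro marks.AE_pair_measure AE_pmfI) (auto simp: finite_E E_nonempty)
  then show ?thesis
    by (intro AE_all_countable[THEN iffD2] allI AE_PiM_component) (auto simp: prob_space_mark)
qed

lemma nn_integral_paths_case_nat: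
  assumes "f \<in> borel_measurable paths"
  shows "(\<integral>\<^sup>+ \<omega>. f \<omega> \<partial>paths) = (\<integral>\<^sup>+ x. \<integral>\<^sup>+ \<omega>. f (case_nat x \<omega>) \<partial>paths \<partial>mark)"
proof -
  have case_nat_meas: "(\<lambda>z. case_nat (fst z) (snd z)) \<in> mark \<Otimes>\<^sub>M paths \<rightarrow>\<^sub>M paths"
    by (rule measurable_case_nat'[OF measurable_fst measurable_snd])
  have "(\<integral>\<^sup>+ \<omega>. f \<omega> \<partial>paths) = (\<integral>\<^sup>+ \<omega>. f \<omega> \<partial>distr (mark \<Otimes>\<^sub>M paths) paths (\<lambda>(x, \<omega>). case_nat x \<omega>))"
    by (simp add: paths.PiM_iter)
  also have "\<dots> = (\<integral>\<^sup>+ z. f (case_nat (fst z) (snd z)) \<partial>(mark \<Otimes>\<^sub>M paths))"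
    using case_nat_meas by (subst nn_integral_distr) (auto simp: assms split_beta')
  also have "\<dots> = (\<integral>\<^sup>+ x. \<integral>\<^sup>+ \<omega>. f (case_nat x \<omega>) \<partial>paths \<partial>mark)"
    using measurable_compose[OF case_nat_meas assms] by (subst paths.P.nn_integral_fst[symmetric]) simp_all
  finally show ?thesis .
qed

lemma nn_integral_first_mark:
  assumes G: "\<And>e. G e \<in> borel_measurable paths" and w: "w \<in> borel_measurable borel"
  shows "(\<integral>\<^sup>+ \<omega>. w (snd (\<omega> 0)) * G (fst (\<omega> 0)) (shift_path \<omega>) \<partial>paths)
       = (\<Sum>e\<in>E. \<integral>\<^sup>+ \<omega>. G e \<omega> \<partial>paths) / of_nat (card E) * (\<integral>\<^sup>+ g. w g \<partial>holding)"
proof -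
  define u where "u e = (\<integral>\<^sup>+ \<omega>. G e \<omega> \<partial>paths)" for e
  have "borel_measurable holding = borel_measurable (borel :: real measure)"
    by (rule measurable_cong_sets) simp_all
  with w have w_holding: "w \<in> borel_measurable holding" by simp
  have G_first: "(\<lambda>\<omega>. G (fst (\<omega> 0)) (shift_path \<omega>)) \<in> borel_measurable paths"
    using measurable_compose[OF measurable_shift_path G]
    by (rule measurable_compose_countable[OF _ measurable_mark_edge])
  have w_first: "(\<lambda>\<omega>. w (snd (\<omega> 0))) \<in> borel_measurable paths"
    using measurable_compose[OF measurable_mark_gap w] .
  have u_w: "(\<lambda>x. w (snd x) * u (fst x)) \<in> borel_measurable mark"
    unfolding mark_def
    by (intro borel_measurable_times_ennreal measurable_compose[OF measurable_snd w_holding]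
        measurable_compose[OF measurable_fst]) simp
  have "(\<integral>\<^sup>+ \<omega>. w (snd (\<omega> 0)) * G (fst (\<omega> 0)) (shift_path \<omega>) \<partial>paths)
      = (\<integral>\<^sup>+ x. \<integral>\<^sup>+ \<omega>. w (snd x) * G (fst x) \<omega> \<partial>paths \<partial>mark)"
    by (subst nn_integral_paths_case_nat) (simp_all add: borel_measurable_times_ennreal[OF w_first G_first])
  also have "\<dots> = (\<integral>\<^sup>+ x. w (snd x) * u (fst x) \<partial>mark)"
    unfolding u_def by (intro nn_integral_cong nn_integral_cmult G)
  also have "\<dots> = (\<integral>\<^sup>+ e. \<integral>\<^sup>+ g. u e * w g \<partial>holding \<partial>measure_pmf (pmf_of_set E))"
    using u_w unfolding mark_def by (subst marks.M2.nn_integral_fst[symmetric]) (simp_all add: mult.commute)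
  also have "\<dots> = (\<integral>\<^sup>+ e. u e * (\<integral>\<^sup>+ g. w g \<partial>holding) \<partial>measure_pmf (pmf_of_set E))"
    by (intro nn_integral_cong nn_integral_cmult w_holding)
  also have "\<dots> = (\<integral>\<^sup>+ e. u e \<partial>measure_pmf (pmf_of_set E)) * (\<integral>\<^sup>+ g. w g \<partial>holding)"
    by (rule nn_integral_multc) simp
  finally show ?thesis
    by (simp add: u_def nn_integral_pmf_of_set[OF E_nonempty finite_E])
qed

lemma mean_over_edges_le:
  fixes G :: "vert \<times> vert \<Rightarrow> ennreal"
  assumes "\<And>e. e \<in> E \<Longrightarrow> G e \<le> ennreal (x e)" "\<And>e. e \<in> E \<Longrightarrow> 0 \<le> x e"
    and "\<kappa> * (\<Sum>e\<in>E. x e) \<le> rate * y"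
  shows "(\<Sum>e\<in>E. G e) / of_nat (card E) * ennreal \<kappa> \<le> ennreal y"
proof (cases "0 < \<kappa>")
  case True
  have sum_nonneg: "0 \<le> (\<Sum>e\<in>E. x e)" using assms(2) by (rule sum_nonneg)
  have "(\<Sum>e\<in>E. G e) \<le> (\<Sum>e\<in>E. ennreal (x e))"
    using assms(1) by (rule sum_mono)
  also have "\<dots> = ennreal (\<Sum>e\<in>E. x e)"
    using assms(2) by (rule sum_ennreal)
  finally have "(\<Sum>e\<in>E. G e) / of_nat (card E) \<le> ennreal (\<Sum>e\<in>E. x e) / of_nat (card E)"
    by (rule divide_right_mono_ennreal)
  then have "(\<Sum>e\<in>E. G e) / of_nat (card E) * ennreal \<kappa>
      \<le> ennreal (\<Sum>e\<in>E. x e) / of_nat (card E) * ennreal \<kappa>"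
    by (rule mult_right_mono) simp
  also have "\<dots> = ennreal ((\<Sum>e\<in>E. x e) / rate * \<kappa>)"
    using rate_pos True sum_nonneg
    by (simp add: ennreal_of_nat_eq_real_of_nat divide_ennreal flip: ennreal_mult)
  also have "\<dots> \<le> ennreal y"
    using assms(3) rate_pos by (intro ennreal_leI) (simp add: field_simps)
  finally show ?thesis .
qed (simp add: ennreal_neg)

end

section \<open>Lyapunov bounds for leaving a window\<close>

locale ipd_exit = ipd_clock +
  fixes F :: "config \<Rightarrow> nat" and lo hi :: nat
begin

definition inside :: "config \<Rightarrow> bool" where
  "inside A \<longleftrightarrow> lo < F A \<and> F A < hi"

definition first_exit :: "config \<Rightarrow> ipd_path \<Rightarrow> nat \<Rightarrow> bool" where
  "first_exit A \<omega> m \<longleftrightarrow> 0 < m \<and> \<not> inside (jump A \<omega> m) \<and> (\<forall>j\<in>{0<..<m}. inside (jump A \<omega> j))"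

lemma pred_inside_jump [measurable]: "Measurable.pred paths (\<lambda>\<omega>. inside (jump A \<omega> j))"
  using measurable_compose[OF measurable_jump, of inside "count_space UNIV"] by simp

lemma pred_first_exit [measurable]: "Measurable.pred paths (\<lambda>\<omega>. first_exit A \<omega> m)"
  unfolding first_exit_def by measurable

lemma first_exit_shift_path:
  assumes "first_exit A \<omega> (Suc m)" "0 < m"
  shows "inside (ipd_update A (fst (\<omega> 0)))" "first_exit (ipd_update A (fst (\<omega> 0))) (shift_path \<omega>) m"
proof -
  have shift: "jump (ipd_update A (fst (\<omega> 0))) (shift_path \<omega>) j = jump A \<omega> (Suc j)" for j
    by (rule jump_Suc_shift_path[symmetric])
  have inside_before: "inside (jump A \<omega> j)" if "0 < j" "j < Suc m" for j
    using assms(1) that by (simp add: first_exit_def)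
  show "inside (ipd_update A (fst (\<omega> 0)))"
    using inside_before[of 1] assms(2) by simp
  show "first_exit (ipd_update A (fst (\<omega> 0))) (shift_path \<omega>) m"
    using assms inside_before unfolding first_exit_def shift by (auto simp del: jump.simps(2))
qed

(* The product of the weights w (gap j), j < tau, times the payoff p at the first exit time tau,
   truncated to s if tau > k. The weights 1, exp (b * gap) and a constant above 1 give exit
   probabilities, exponential moments of the exit time and the decay of the probability of
   staying inside. *)
fun exit_value :: "(real \<Rightarrow> ennreal) \<Rightarrow> (config \<Rightarrow> ennreal) \<Rightarrow> ennreal \<Rightarrow> nat \<Rightarrow> config \<Rightarrow> ipd_path \<Rightarrow> ennreal"
where
  "exit_value w p s 0 A \<omega> = s"
| "exit_value w p s (Suc k) A \<omega> = w (snd (\<omega> 0)) *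
     (if inside (ipd_update A (fst (\<omega> 0)))
      then exit_value w p s k (ipd_update A (fst (\<omega> 0))) (shift_path \<omega>)
      else p (ipd_update A (fst (\<omega> 0))))"

lemma measurable_exit_value [measurable]:
  assumes "w \<in> borel_measurable borel"
  shows "exit_value w p s k A \<in> borel_measurable paths"
proof (induction k arbitrary: A)
  case 0
  have "exit_value w p s 0 A = (\<lambda>_. s)" by (simp add: fun_eq_iff)
  then show ?case by simp
next
  case (Suc k)
  define G where "G e \<omega> = (if inside (ipd_update A e)
    then exit_value w p s k (ipd_update A e) (shift_path \<omega>) else p (ipd_update A e))" for e \<omega>
  have "(\<lambda>\<omega>. G e \<omega>) \<in> borel_measurable paths" for e
    unfolding G_def using measurable_compose[OF measurable_shift_path Suc.IH] by auto
  then have "(\<lambda>\<omega>. G (fst (\<omega> 0)) \<omega>) \<in> borel_measurable paths"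
    by (rule measurable_compose_countable[OF _ measurable_mark_edge])
  moreover have "(\<lambda>\<omega>. w (snd (\<omega> 0))) \<in> borel_measurable paths"
    using measurable_compose[OF measurable_mark_gap assms] .
  ultimately have "(\<lambda>\<omega>. w (snd (\<omega> 0)) * G (fst (\<omega> 0)) \<omega>) \<in> borel_measurable paths"
    by (rule borel_measurable_times_ennreal[rotated])
  moreover have "exit_value w p s (Suc k) A = (\<lambda>\<omega>. w (snd (\<omega> 0)) * G (fst (\<omega> 0)) \<omega>)"
    by (simp add: G_def fun_eq_iff)
  ultimately show ?case by simp
qed

lemma exit_value_first_exit:
  assumes "first_exit A \<omega> m" "m \<le> k"
  shows "exit_value w p s k A \<omega> = (\<Prod>j<m. w (snd (\<omega> j))) * p (jump A \<omega> m)"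
  using assms
proof (induction k arbitrary: A \<omega> m)
  case 0
  then show ?case by (simp add: first_exit_def)
next
  case (Suc k)
  show ?case
  proof (cases "m = 1")
    case True
    then show ?thesis using Suc.prems(1) by (simp add: first_exit_def)
  next
    case False
    then obtain m' where m: "m = Suc m'" "0 < m'"
      using Suc.prems(1) by (cases m) (auto simp: first_exit_def)
    note shifted = first_exit_shift_path[OF Suc.prems(1)[unfolded m(1)] m(2)]
    have "exit_value w p s k (ipd_update A (fst (\<omega> 0))) (shift_path \<omega>)
        = (\<Prod>j<m'. w (snd (shift_path \<omega> j))) * p (jump (ipd_update A (fst (\<omega> 0))) (shift_path \<omega>) m')"
      using Suc.prems(2) m by (intro Suc.IH[OF shifted(2)]) simp
    moreover have "(\<Prod>j<m'. w (snd (shift_path \<omega> j))) = (\<Prod>j<m'. w (snd (\<omega> (Suc j))))"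
      by (simp add: shift_path_apply)
    ultimately show ?thesis
      using shifted(1)
      by (simp add: m prod.lessThan_Suc_shift mult.assoc jump_Suc_shift_path
          del: jump.simps(2) prod.lessThan_Suc)
  qed
qed

lemma exit_value_no_exit:
  assumes "\<forall>j\<in>{0<..k}. inside (jump A \<omega> j)"
  shows "exit_value w p s k A \<omega> = (\<Prod>j<k. w (snd (\<omega> j))) * s"
  using assms
proof (induction k arbitrary: A \<omega>)
  case (Suc k)
  have shift: "jump (ipd_update A (fst (\<omega> 0))) (shift_path \<omega>) j = jump A \<omega> (Suc j)" for j
    by (rule jump_Suc_shift_path[symmetric])
  have "inside (ipd_update A (fst (\<omega> 0)))" using Suc.prems by (auto dest: bspec[of _ _ 1])
  moreover have "\<forall>j\<in>{0<..k}. inside (jump (ipd_update A (fst (\<omega> 0))) (shift_path \<omega>) j)"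
    using Suc.prems unfolding shift by (auto simp del: jump.simps(2))
  moreover have "(\<Prod>j<k. w (snd (shift_path \<omega> j))) = (\<Prod>j<k. w (snd (\<omega> (Suc j))))"
    by (simp add: shift_path_apply)
  ultimately show ?case
    using Suc.IH by (simp add: prod.lessThan_Suc_shift mult.assoc del: prod.lessThan_Suc)
qed simp

lemma exit_value_mono: "exit_value w p 0 k A \<omega> \<le> exit_value w p 0 (Suc k) A \<omega>"
proof (induction k arbitrary: A \<omega>)
  case (Suc k)
  show ?case
    unfolding exit_value.simps(2)[of w p 0 k A \<omega>] exit_value.simps(2)[of w p 0 "Suc k" A \<omega>]
    by (intro mult_left_mono) (auto simp del: exit_value.simps intro: Suc.IH)
qed simp

lemma nn_integral_exit_value_le:
  assumes h_nonneg: "\<And>A. 0 \<le> h A"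
    and exit_le: "\<And>A. \<not> inside A \<Longrightarrow> p A \<le> ennreal (h A)"
    and stay_le: "\<And>A. inside A \<Longrightarrow> s \<le> ennreal (h A)"
    and w: "w \<in> borel_measurable borel" "(\<integral>\<^sup>+ g. w g \<partial>holding) = ennreal \<kappa>"
    and drift: "\<And>A. inside A \<Longrightarrow> \<kappa> * (\<Sum>e\<in>E. h (ipd_update A e)) \<le> rate * h A"
    and "inside A"
  shows "(\<integral>\<^sup>+ \<omega>. exit_value w p s k A \<omega> \<partial>paths) \<le> ennreal (h A)"
  using \<open>inside A\<close>
proof (induction k arbitrary: A)
  case 0
  then show ?case using stay_le by (simp add: paths.emeasure_space_1)
next
  case (Suc k)
  define G where "G e \<omega> = (if inside (ipd_update A e) then exit_value w p s k (ipd_update A e) \<omega>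
      else p (ipd_update A e))" for e \<omega>
  have G_meas: "G e \<in> borel_measurable paths" for e
    unfolding G_def using measurable_exit_value[OF w(1)] by simp
  have G_le: "(\<integral>\<^sup>+ \<omega>. G e \<omega> \<partial>paths) \<le> ennreal (h (ipd_update A e))" for e
  proof (cases "inside (ipd_update A e)")
    case True
    then show ?thesis using Suc.IH[OF True] by (simp add: G_def)
  next
    case False
    then show ?thesis using exit_le[OF False] by (simp add: G_def paths.emeasure_space_1)
  qed
  have "(\<integral>\<^sup>+ \<omega>. exit_value w p s (Suc k) A \<omega> \<partial>paths)
      = (\<Sum>e\<in>E. \<integral>\<^sup>+ \<omega>. G e \<omega> \<partial>paths) / of_nat (card E) * ennreal \<kappa>"
    using nn_integral_first_mark[OF G_meas w(1)] by (simp add: G_def w(2))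
  also have "\<dots> \<le> ennreal (h A)"
    by (rule mean_over_edges_le) (use G_le h_nonneg drift[OF Suc.prems] in auto)
  finally show ?case .
qed

lemma pred_F_jump_le [measurable]: "Measurable.pred paths (\<lambda>\<omega>. F (jump A \<omega> j) \<le> c)"
  using measurable_compose[OF measurable_jump, of "\<lambda>A. F A \<le> c" "count_space UNIV"] by simp

lemma pred_le_F_jump [measurable]: "Measurable.pred paths (\<lambda>\<omega>. c \<le> F (jump A \<omega> j))"
  using measurable_compose[OF measurable_jump, of "\<lambda>A. c \<le> F A" "count_space UNIV"] by simp

lemma first_exit_exists:
  assumes "\<not> (\<forall>j>0. inside (jump A \<omega> j))"
  shows "\<exists>m. first_exit A \<omega> m"
proof -
  define m where "m = (LEAST j. 0 < j \<and> \<not> inside (jump A \<omega> j))"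
  have "0 < m \<and> \<not> inside (jump A \<omega> m)"
    unfolding m_def by (rule LeastI_ex) (use assms in auto)
  moreover have "inside (jump A \<omega> j)" if "j \<in> {0<..<m}" for j
    using not_less_Least[of j "\<lambda>j. 0 < j \<and> \<not> inside (jump A \<omega> j)"] that by (auto simp: m_def)
  ultimately show ?thesis by (auto simp: first_exit_def)
qed

lemma measure_UN_exit_value_ge_le:
  assumes w: "w \<in> borel_measurable borel" and "0 < a" "0 \<le> y"
    and nn_integral_le: "\<And>k. (\<integral>\<^sup>+ \<omega>. exit_value w p 0 k A \<omega> \<partial>paths) \<le> ennreal y"
  shows "measure paths (\<Union>k. {\<omega> \<in> space paths. ennreal a \<le> exit_value w p 0 k A \<omega>}) \<le> y / a"
proof (rule paths.measure_UN_incseq_le)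
  have meas: "exit_value w p 0 k A \<in> borel_measurable paths" for k
    using w by (rule measurable_exit_value)
  then have "{\<omega> \<in> space paths. ennreal a \<le> exit_value w p 0 k A \<omega>} \<in> sets paths" for k
    by measurable
  then show "range (\<lambda>k. {\<omega> \<in> space paths. ennreal a \<le> exit_value w p 0 k A \<omega>}) \<subseteq> sets paths"
    by auto
  show "incseq (\<lambda>k. {\<omega> \<in> space paths. ennreal a \<le> exit_value w p 0 k A \<omega>})"
    by (rule incseq_SucI) (auto simp del: exit_value.simps intro: order_trans[OF _ exit_value_mono])
  show "measure paths {\<omega> \<in> space paths. ennreal a \<le> exit_value w p 0 k A \<omega>} \<le> y / a" for k
    using paths.finite_measure_axioms meas \<open>0 < a\<close> \<open>0 \<le> y\<close> nn_integral_le
    by (rule nn_integral_Markov_measure_le)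
qed

lemma rate_ratio_drift_le:
  assumes "0 \<le> b" "b < rate" "(\<Sum>e\<in>E. h (ipd_update A e)) \<le> (rate - b) * h A"
  shows "rate / (rate - b) * (\<Sum>e\<in>E. h (ipd_update A e)) \<le> rate * h A"
proof -
  have "rate / (rate - b) * (\<Sum>e\<in>E. h (ipd_update A e)) \<le> rate / (rate - b) * ((rate - b) * h A)"
    using assms rate_pos by (intro mult_left_mono) auto
  also have "\<dots> = rate * h A" using assms(2) by simp
  finally show ?thesis .
qed

lemma prob_exit_below_le:
  assumes \<phi>_nonneg: "\<And>A. 0 \<le> \<phi> A" and below: "\<And>A. F A \<le> lo \<Longrightarrow> 1 \<le> \<phi> A"
    and drift: "\<And>A. inside A \<Longrightarrow> (\<Sum>e\<in>E. \<phi> (ipd_update A e)) \<le> rate * \<phi> A"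
    and "inside A0"
  shows "measure paths {\<omega> \<in> space paths. \<exists>m. first_exit A0 \<omega> m \<and> F (jump A0 \<omega> m) \<le> lo} \<le> \<phi> A0"
proof -
  let ?V = "exit_value (\<lambda>_. 1) (\<lambda>A. if F A \<le> lo then 1 else 0) 0"
  let ?H = "\<Union>k. {\<omega> \<in> space paths. ennreal 1 \<le> ?V k A0 \<omega>}"
  have sub: "{\<omega> \<in> space paths. \<exists>m. first_exit A0 \<omega> m \<and> F (jump A0 \<omega> m) \<le> lo} \<subseteq> ?H"
  proof clarify
    fix \<omega> m assume "\<omega> \<in> space paths" "first_exit A0 \<omega> m" "F (jump A0 \<omega> m) \<le> lo"
    then show "\<omega> \<in> ?H" by (auto simp: exit_value_first_exit intro!: exI[of _ m])
  qed
  have "?V k A0 \<in> borel_measurable paths" for k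
    by (rule measurable_exit_value) simp
  then have H_sets: "?H \<in> sets paths" by measurable
  have "measure paths ?H \<le> \<phi> A0 / 1"
  proof (rule measure_UN_exit_value_ge_le)
    show "(\<integral>\<^sup>+ \<omega>. ?V k A0 \<omega> \<partial>paths) \<le> ennreal (\<phi> A0)" for k
      by (rule nn_integral_exit_value_le[where \<kappa> = 1])
        (use \<phi>_nonneg below drift \<open>inside A0\<close> prob_space.emeasure_space_1[OF prob_space_holding]
          in \<open>auto simp: inside_def\<close>)
  qed (simp_all add: \<phi>_nonneg)
  then show ?thesis using paths.finite_measure_mono[OF sub H_sets] by simp
qed

lemma prob_exit_above_late_le:
  assumes h_nonneg: "\<And>A. 0 \<le> h A" and above: "\<And>A. hi \<le> F A \<Longrightarrow> 1 \<le> h A"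
    and b: "0 \<le> b" "b < rate"
    and drift: "\<And>A. inside A \<Longrightarrow> (\<Sum>e\<in>E. h (ipd_update A e)) \<le> (rate - b) * h A"
    and "inside A0"
  shows "measure paths {\<omega> \<in> space paths. \<exists>m. first_exit A0 \<omega> m \<and> hi \<le> F (jump A0 \<omega> m)
           \<and> t \<le> jump_time \<omega> m} \<le> h A0 / exp (b * t)"
proof -
  let ?V = "exit_value (\<lambda>g. ennreal (exp (b * g))) (\<lambda>A. if hi \<le> F A then 1 else 0) 0"
  let ?W = "\<Union>k. {\<omega> \<in> space paths. ennreal (exp (b * t)) \<le> ?V k A0 \<omega>}"
  have sub: "{\<omega> \<in> space paths. \<exists>m. first_exit A0 \<omega> m \<and> hi \<le> F (jump A0 \<omega> m)
      \<and> t \<le> jump_time \<omega> m} \<subseteq> ?W"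
  proof clarify
    fix \<omega> m assume \<omega>: "\<omega> \<in> space paths" and m: "first_exit A0 \<omega> m" "hi \<le> F (jump A0 \<omega> m)"
      "t \<le> jump_time \<omega> m"
    have "?V m A0 \<omega> = ennreal (exp (b * jump_time \<omega> m))"
      using m by (simp add: exit_value_first_exit prod_ennreal exp_sum jump_time_def sum_distrib_left)
    also have "ennreal (exp (b * t)) \<le> \<dots>"
      using m(3) b by (intro ennreal_leI) (simp add: mult_left_mono)
    finally show "\<omega> \<in> ?W" using \<omega> by blast
  qed
  have "?V k A0 \<in> borel_measurable paths" for k
    by (rule measurable_exit_value) simp
  then have W_sets: "?W \<in> sets paths" by measurable
  have "measure paths ?W \<le> h A0 / exp (b * t)"
  proof (rule measure_UN_exit_value_ge_le)
    show "(\<integral>\<^sup>+ \<omega>. ?V k A0 \<omega> \<partial>paths) \<le> ennreal (h A0)" for k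
      by (rule nn_integral_exit_value_le[where \<kappa> = "rate / (rate - b)"])
        (use h_nonneg above \<open>inside A0\<close> nn_integral_exp_exponential_density[OF rate_pos b(2)]
          rate_ratio_drift_le[OF b drift] in \<open>auto simp: inside_def\<close>)
  qed (simp_all add: h_nonneg)
  then show ?thesis using paths.finite_measure_mono[OF sub W_sets] by simp
qed

lemma prob_never_exit:
  assumes h_nonneg: "\<And>A. 0 \<le> h A" and inside_ge: "\<And>A. inside A \<Longrightarrow> 1 \<le> h A"
    and b: "0 < b" "b < rate"
    and drift: "\<And>A. inside A \<Longrightarrow> (\<Sum>e\<in>E. h (ipd_update A e)) \<le> (rate - b) * h A"
    and "inside A0"
  shows "measure paths {\<omega> \<in> space paths. \<forall>j>0. inside (jump A0 \<omega> j)} = 0"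
proof -
  define \<kappa> where "\<kappa> = rate / (rate - b)"
  have \<kappa>: "1 < \<kappa>" using b by (simp add: \<kappa>_def)
  let ?never = "{\<omega> \<in> space paths. \<forall>j>0. inside (jump A0 \<omega> j)}"
  let ?V = "exit_value (\<lambda>_. ennreal \<kappa>) (\<lambda>_. 0) 1"
  have bound: "measure paths ?never \<le> h A0 * (1 / \<kappa>) ^ k" for k
  proof -
    let ?N = "{\<omega> \<in> space paths. ennreal (\<kappa> ^ k) \<le> ?V k A0 \<omega>}"
    have V_meas: "?V k A0 \<in> borel_measurable paths"
      by (rule measurable_exit_value) simp
    then have N_sets: "?N \<in> sets paths" by measurable
    have sub: "?never \<subseteq> ?N"
    proof clarify
      fix \<omega> assume \<omega>: "\<omega> \<in> space paths" and never: "\<forall>j>0. inside (jump A0 \<omega> j)"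
      have "?V k A0 \<omega> = (\<Prod>j<k. ennreal \<kappa>) * 1"
        using never by (intro exit_value_no_exit) simp
      then show "ennreal (\<kappa> ^ k) \<le> ?V k A0 \<omega>"
        using \<kappa> by (simp add: ennreal_power)
    qed
    have "(\<integral>\<^sup>+ \<omega>. ?V k A0 \<omega> \<partial>paths) \<le> ennreal (h A0)"
      using h_nonneg inside_ge \<open>inside A0\<close> rate_ratio_drift_le[OF _ b(2) drift] b(1)
        prob_space.emeasure_space_1[OF prob_space_holding]
      by (intro nn_integral_exit_value_le[where \<kappa> = \<kappa>]) (simp_all add: ennreal_leI \<kappa>_def)
    then have "measure paths ?N \<le> h A0 / \<kappa> ^ k"
      using h_nonneg \<kappa> V_meas by (intro nn_integral_Markov_measure_le) (simp_all add: paths.finite_measure_axioms)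
    then show ?thesis
      using paths.finite_measure_mono[OF sub N_sets] by (simp add: power_one_over)
  qed
  have "(\<lambda>k. h A0 * (1 / \<kappa>) ^ k) \<longlonglongrightarrow> 0"
    using \<kappa> by (intro tendsto_mult_right_zero LIMSEQ_power_zero) auto
  then have "measure paths ?never \<le> 0"
    using bound by (intro LIMSEQ_le_const) auto
  then show ?thesis by (simp add: measure_le_0_iff)
qed

lemma first_exit_above_at_hi:
  assumes edges: "\<And>k. fst (\<omega> k) \<in> E"
    and skip: "\<And>A e. e \<in> E \<Longrightarrow> F (ipd_update A e) \<le> F A + 1"
    and "inside A0" "first_exit A0 \<omega> m" "hi \<le> F (jump A0 \<omega> m)"
  shows "F (jump A0 \<omega> m) = hi"
proof -
  obtain m' where m': "m = Suc m'" using assms(4) by (cases m) (auto simp: first_exit_def)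
  have "F (jump A0 \<omega> m') < hi"
    using assms(3,4) by (cases "m' = 0") (auto simp: first_exit_def inside_def m')
  then show ?thesis
    using assms(5) skip[OF edges[of m'], of "jump A0 \<omega> m'"] by (simp add: m')
qed

lemma hit_order_cases:
  assumes valid: "\<And>k. fst (\<omega> k) \<in> E \<and> 0 < snd (\<omega> k)"
    and skip: "\<And>A e. e \<in> E \<Longrightarrow> F (ipd_update A e) \<le> F A + 1"
    and "inside A0"
    and late: "min (hit_time F lo (ipd_state A0 \<omega>)) (ennreal t) \<le> hit_time F hi (ipd_state A0 \<omega>)"
  shows "(\<exists>m. first_exit A0 \<omega> m \<and> F (jump A0 \<omega> m) \<le> lo)
       \<or> (\<exists>m. first_exit A0 \<omega> m \<and> hi \<le> F (jump A0 \<omega> m) \<and> t \<le> jump_time \<omega> m)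
       \<or> (\<forall>j>0. inside (jump A0 \<omega> j))"
proof (rule ccontr)
  assume no_case: "\<not> ?thesis"
  then obtain m where exit: "first_exit A0 \<omega> m" using first_exit_exists by blast
  have pos: "\<And>k. 0 < snd (\<omega> k)" using valid by blast
  have "\<not> F (jump A0 \<omega> m) \<le> lo" using no_case exit by blast
  then have above: "hi \<le> F (jump A0 \<omega> m)" using exit by (auto simp: first_exit_def inside_def)
  then have early: "jump_time \<omega> m < t" using no_case exit by (meson not_le)
  have at_hi: "F (jump A0 \<omega> m) = hi"
    by (rule first_exit_above_at_hi[OF _ skip \<open>inside A0\<close> exit above]) (use valid in blast)
  have hit_hi: "hit_time F hi (ipd_state A0 \<omega>) \<le> ennreal (jump_time \<omega> m)"
    using pos at_hi by (rule hit_time_le_jump_time)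
  have hit_lo: "ennreal (jump_time \<omega> (Suc m)) \<le> hit_time F lo (ipd_state A0 \<omega>)"
  proof (rule jump_time_le_hit_time[OF pos])
    fix j assume j: "F (jump A0 \<omega> j) = lo"
    show "Suc m \<le> j"
    proof (rule ccontr)
      assume "\<not> Suc m \<le> j"
      then have "j = 0 \<or> j \<in> {0<..<m} \<or> j = m" by auto
      then show False using j exit \<open>inside A0\<close> at_hi by (auto simp: first_exit_def inside_def)
    qed
  qed simp
  have J_nonneg: "0 \<le> jump_time \<omega> m" by (rule jump_time_nonneg[OF pos])
  have "jump_time \<omega> m < jump_time \<omega> (Suc m)"
    using strict_mono_jump_time[OF pos] by (simp add: strict_mono_def)
  then have "ennreal (jump_time \<omega> m) < ennreal (jump_time \<omega> (Suc m))"
    using J_nonneg by (simp add: ennreal_less_iff)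
  then have before_lo: "hit_time F hi (ipd_state A0 \<omega>) < hit_time F lo (ipd_state A0 \<omega>)"
    using hit_hi hit_lo by (meson le_less_trans less_le_trans)
  have "ennreal (jump_time \<omega> m) < ennreal t"
    using early J_nonneg by (simp add: ennreal_less_iff)
  then have before_t: "hit_time F hi (ipd_state A0 \<omega>) < ennreal t"
    using hit_hi by (meson le_less_trans)
  show False using late before_lo before_t by (simp add: min_def split: if_splits)
qed

theorem prob_hit_order_le:
  assumes skip: "\<And>A e. e \<in> E \<Longrightarrow> F (ipd_update A e) \<le> F A + 1" and "inside A0"
    and \<phi>_nonneg: "\<And>A. 0 \<le> \<phi> A" and \<phi>_below: "\<And>A. F A \<le> lo \<Longrightarrow> 1 \<le> \<phi> A"
    and \<phi>_drift: "\<And>A. inside A \<Longrightarrow> (\<Sum>e\<in>E. \<phi> (ipd_update A e)) \<le> rate * \<phi> A"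
    and h_ge: "\<And>A. 1 \<le> h A" and b: "0 < b" "b < rate"
    and h_drift: "\<And>A. inside A \<Longrightarrow> (\<Sum>e\<in>E. h (ipd_update A e)) \<le> (rate - b) * h A"
  shows "measure paths {\<omega> \<in> space paths.
           min (hit_time F lo (ipd_state A0 \<omega>)) (ennreal t) \<le> hit_time F hi (ipd_state A0 \<omega>)}
         \<le> \<phi> A0 + h A0 / exp (b * t)"
proof -
  define below where "below = {\<omega> \<in> space paths. \<exists>m. first_exit A0 \<omega> m \<and> F (jump A0 \<omega> m) \<le> lo}"
  define late where "late = {\<omega> \<in> space paths. \<exists>m. first_exit A0 \<omega> m \<and> hi \<le> F (jump A0 \<omega> m)
      \<and> t \<le> jump_time \<omega> m}"
  define never where "never = {\<omega> \<in> space paths. \<forall>j>0. inside (jump A0 \<omega> j)}"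
  have sets: "below \<in> sets paths" "late \<in> sets paths" "never \<in> sets paths"
    unfolding below_def late_def never_def by measurable
  have h_nonneg: "0 \<le> h A" for A using h_ge[of A] by simp
  have "AE \<omega> in paths. min (hit_time F lo (ipd_state A0 \<omega>)) (ennreal t) \<le> hit_time F hi (ipd_state A0 \<omega>)
      \<longrightarrow> \<omega> \<in> below \<union> late \<union> never"
    using AE_paths_valid
  proof eventually_elim
    case (elim \<omega>)
    show ?case
    proof
      assume fail: "min (hit_time F lo (ipd_state A0 \<omega>)) (ennreal t) \<le> hit_time F hi (ipd_state A0 \<omega>)"
      have "(\<exists>m. first_exit A0 \<omega> m \<and> F (jump A0 \<omega> m) \<le> lo)
          \<or> (\<exists>m. first_exit A0 \<omega> m \<and> hi \<le> F (jump A0 \<omega> m) \<and> t \<le> jump_time \<omega> m)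
          \<or> (\<forall>j>0. inside (jump A0 \<omega> j))"
        using elim by (intro hit_order_cases[OF _ skip \<open>inside A0\<close> fail]) auto
      then show "\<omega> \<in> below \<union> late \<union> never"
        unfolding below_def late_def never_def space_paths by blast
    qed
  qed
  then have "measure paths {\<omega> \<in> space paths.
      min (hit_time F lo (ipd_state A0 \<omega>)) (ennreal t) \<le> hit_time F hi (ipd_state A0 \<omega>)}
      \<le> measure paths (below \<union> late \<union> never)"
    using sets by (intro paths.finite_measure_mono_AE) auto
  also have "\<dots> \<le> measure paths below + measure paths late + measure paths never"
    using sets by (intro order_trans[OF measure_Un_le] add_right_mono measure_Un_le) auto
  also have "\<dots> \<le> \<phi> A0 + h A0 / exp (b * t) + 0"
  proof (intro add_mono)
    show "measure paths below \<le> \<phi> A0"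
      unfolding below_def by (rule prob_exit_below_le) (use assms in auto)
    show "measure paths late \<le> h A0 / exp (b * t)"
      unfolding late_def by (rule prob_exit_above_late_le) (use assms h_nonneg in auto)
    show "measure paths never \<le> 0"
      unfolding never_def using prob_never_exit[of h b A0] assms h_nonneg by simp
  qed
  finally show ?thesis by simp
qed

end

section \<open>The star of the caterpillar\<close>

lemma cat_edges_irrefl: "(u, u) \<notin> cat_edges n d"
  by (auto simp: cat_edges_def)

lemma cat_edges_asym: "(u, v) \<in> cat_edges n d \<Longrightarrow> (v, u) \<notin> cat_edges n d"
  by (auto simp: cat_edges_def)

lemma finite_cat_edges: "finite (cat_edges n d)"
proof (rule finite_subset)
  show "cat_edges n d \<subseteq> ({..<n} \<times> {0::nat}) \<times> ({..<n+1} \<times> {..d})"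
    by (auto simp: cat_edges_def pend_def split: if_splits)
qed auto

lemma cat_edges_leaf_unique:
  assumes "e \<in> cat_edges n d" "fst e = v \<or> snd e = v" "snd v \<noteq> 0"
    and "(r, v) \<in> cat_edges n d \<or> (v, r) \<in> cat_edges n d"
  shows "e = (r, v)"
  using assms by (auto simp: cat_edges_def)

locale caterpillar_star =
  fixes n d i :: nat and \<sigma> :: "nat \<Rightarrow> vert"
  assumes three_le_d: "3 \<le> d"
    and \<sigma>_bij: "bij_betw \<sigma> {1..d} (nbrs (cat_edges n d) (i, 0))"
    and spine_nbrs: "{v \<in> nbrs (cat_edges n d) (i, 0). snd v = 0} \<subseteq> {\<sigma> 1, \<sigma> 2}"
begin

abbreviation E :: "(vert \<times> vert) set" where
  "E \<equiv> cat_edges n d"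

abbreviation root :: vert where
  "root \<equiv> (i, 0)"

definition defectors :: "config \<Rightarrow> nat set" where
  "defectors A = {k \<in> {3..d}. A (\<sigma> k) = Def}"

definition cooperators :: "config \<Rightarrow> nat set" where
  "cooperators A = {k \<in> {3..d}. A (\<sigma> k) \<noteq> Def}"

definition ND :: "config \<Rightarrow> nat" where
  "ND A = card (defectors A)"

lemma \<sigma>_nbrs: "k \<in> {1..d} \<Longrightarrow> \<sigma> k \<in> nbrs E root"
  using \<sigma>_bij by (auto simp: bij_betw_def)

lemma \<sigma>_inj: "j \<in> {1..d} \<Longrightarrow> k \<in> {1..d} \<Longrightarrow> \<sigma> j = \<sigma> k \<Longrightarrow> j = k"
  using \<sigma>_bij by (auto simp: bij_betw_def dest: inj_onD)

lemma \<sigma>_ne_root: "k \<in> {1..d} \<Longrightarrow> \<sigma> k \<noteq> root"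
  using \<sigma>_nbrs[of k] cat_edges_irrefl[of root n d] by (auto simp: nbrs_def)

lemma leaf_off_spine:
  assumes "k \<in> {3..d}"
  shows "snd (\<sigma> k) \<noteq> 0"
proof
  assume "snd (\<sigma> k) = 0"
  then have "\<sigma> k \<in> {\<sigma> 1, \<sigma> 2}" using spine_nbrs \<sigma>_nbrs[of k] assms by auto
  then show False using \<sigma>_inj[of k 1] \<sigma>_inj[of k 2] assms three_le_d by auto
qed

lemma leaf_edge_unique:
  assumes "k \<in> {3..d}" "e \<in> E" "fst e = \<sigma> k \<or> snd e = \<sigma> k"
  shows "e = (root, \<sigma> k)"
  using cat_edges_leaf_unique[OF assms(2,3) leaf_off_spine[OF assms(1)]] \<sigma>_nbrs[of k] assms(1)
  by (auto simp: nbrs_def)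

definition root_edges :: "(vert \<times> vert) set" where
  "root_edges = {e \<in> E. fst e = root \<or> snd e = root}"

definition other_end :: "vert \<times> vert \<Rightarrow> vert" where
  "other_end e = (if fst e = root then snd e else fst e)"

lemma bij_betw_other_end: "bij_betw other_end root_edges (nbrs E root)"
proof (rule bij_betwI')
  fix x y assume "x \<in> root_edges" "y \<in> root_edges"
  then show "(other_end x = other_end y) = (x = y)"
    using cat_edges_asym cat_edges_irrefl unfolding root_edges_def other_end_def
    by (cases x; cases y) (auto split: if_splits)
next
  fix x assume "x \<in> root_edges"
  then show "other_end x \<in> nbrs E root"
    unfolding root_edges_def other_end_def nbrs_def by (cases x) auto
next
  fix y assume "y \<in> nbrs E root"
  then consider "(root, y) \<in> E" | "(y, root) \<in> E" by (auto simp: nbrs_def)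
  then show "\<exists>x\<in>root_edges. y = other_end x"
  proof cases
    case 1
    then show ?thesis by (intro bexI[of _ "(root, y)"]) (auto simp: root_edges_def other_end_def)
  next
    case 2
    then have "y \<noteq> root" using cat_edges_irrefl by auto
    with 2 show ?thesis by (intro bexI[of _ "(y, root)"]) (auto simp: root_edges_def other_end_def)
  qed
qed

lemma ipd_update_root_edge: "e \<in> root_edges \<Longrightarrow> ipd_update A e = ipd_update A (root, other_end e)"
  unfolding root_edges_def other_end_def by (cases e) (auto simp: ipd_update_swap)

lemma card_root_edges: "card root_edges = d"
  using bij_betw_same_card[OF bij_betw_other_end] bij_betw_same_card[OF \<sigma>_bij] by simp

lemma sum_root_edges:
  "(\<Sum>e\<in>root_edges. G (ipd_update A e)) = (\<Sum>k\<in>{1..d}. G (ipd_update A (root, \<sigma> k)))"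
proof -
  have "(\<Sum>e\<in>root_edges. G (ipd_update A e)) = (\<Sum>e\<in>root_edges. G (ipd_update A (root, other_end e)))"
    by (rule sum.cong) (simp_all add: ipd_update_root_edge)
  also have "\<dots> = (\<Sum>v\<in>nbrs E root. G (ipd_update A (root, v)))"
    by (rule sum.reindex_bij_betw[OF bij_betw_other_end])
  also have "\<dots> = (\<Sum>k\<in>{1..d}. G (ipd_update A (root, \<sigma> k)))"
    by (rule sum.reindex_bij_betw[OF \<sigma>_bij, symmetric])
  finally show ?thesis .
qed

lemma d_le_card_E: "d \<le> card E"
  using card_mono[OF finite_cat_edges, of root_edges] card_root_edges by (auto simp: root_edges_def)

lemma E_nonempty: "E \<noteq> {}"
  using d_le_card_E three_le_d by auto

lemma ipd_update_off_root:
  assumes "e \<in> E" "e \<notin> root_edges"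
  shows "ipd_update A e root = A root" "k \<in> {3..d} \<Longrightarrow> ipd_update A e (\<sigma> k) = A (\<sigma> k)"
proof -
  obtain u v where e: "e = (u, v)" by (cases e)
  have uv: "u \<noteq> root" "v \<noteq> root" using assms by (auto simp: root_edges_def e)
  then show "ipd_update A e root = A root" by (simp add: e ipd_update_eq)
  assume k: "k \<in> {3..d}"
  have "u \<noteq> \<sigma> k" "v \<noteq> \<sigma> k" using leaf_edge_unique[OF k assms(1)] uv by (auto simp: e)
  then show "ipd_update A e (\<sigma> k) = A (\<sigma> k)" by (simp add: e ipd_update_eq)
qed

lemma ND_cong: "(\<And>k. k \<in> {3..d} \<Longrightarrow> B (\<sigma> k) = A (\<sigma> k)) \<Longrightarrow> ND B = ND A"
  unfolding ND_def defectors_def by (rule arg_cong[where f = card]) auto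

lemma sum_ipd_update_eq:
  "(\<Sum>e\<in>E. f (ND (ipd_update A e)) (ipd_update A e root))
   = real (card E - d) * f (ND A) (A root) + (\<Sum>k\<in>{1..d}. f (ND (ipd_update A (root, \<sigma> k))) (ipd_update A (root, \<sigma> k) root))"
proof -
  have sub: "root_edges \<subseteq> E" by (auto simp: root_edges_def)
  have "(\<Sum>e\<in>E - root_edges. f (ND (ipd_update A e)) (ipd_update A e root))
      = (\<Sum>e\<in>E - root_edges. f (ND A) (A root))"
    by (intro sum.cong refl arg_cong2[where f = f] ND_cong) (auto simp: ipd_update_off_root)
  also have "\<dots> = real (card E - d) * f (ND A) (A root)"
    using card_Diff_subset[OF finite_subset[OF sub finite_cat_edges] sub] card_root_edges by simp
  finally show ?thesis
    using sum.subset_diff[OF sub finite_cat_edges, of "\<lambda>e. f (ND (ipd_update A e)) (ipd_update A e root)"]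
      sum_root_edges[of "\<lambda>B. f (ND B) (B root)" A] by simp
qed

lemma ND_le: "ND A \<le> d - 2"
proof -
  have "card (defectors A) \<le> card {3..d}" by (intro card_mono) (auto simp: defectors_def)
  then show ?thesis by (simp add: ND_def)
qed

lemma card_cooperators: "card (cooperators A) = d - 2 - ND A"
proof -
  have "cooperators A = {3..d} - defectors A" "defectors A \<subseteq> {3..d}"
    by (auto simp: cooperators_def defectors_def)
  then show ?thesis by (simp add: card_Diff_subset finite_subset ND_def)
qed

lemma ND_update_external:
  assumes "k \<in> {1, 2}"
  shows "ND (A(root := x, \<sigma> k := x)) = ND A"
proof (rule ND_cong)
  fix j assume j: "j \<in> {3..d}"
  then have "\<sigma> j \<noteq> \<sigma> k" using \<sigma>_inj[of j k] assms three_le_d by auto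
  moreover have "\<sigma> j \<noteq> root" using \<sigma>_ne_root[of j] j by auto
  ultimately show "(A(root := x, \<sigma> k := x)) (\<sigma> j) = A (\<sigma> j)" by simp
qed

lemma ND_update_leaf:
  assumes k: "k \<in> {3..d}"
  shows "ND (A(root := x, \<sigma> k := x)) =
    (if x = Def then (if A (\<sigma> k) = Def then ND A else ND A + 1)
     else (if A (\<sigma> k) = Def then ND A - 1 else ND A))"
proof -
  have upd: "(A(root := x, \<sigma> k := x)) (\<sigma> j) = (if j = k then x else A (\<sigma> j))" if "j \<in> {3..d}" for j
  proof -
    have "\<sigma> j \<noteq> root" using \<sigma>_ne_root[of j] that by auto
    moreover have "j \<noteq> k \<Longrightarrow> \<sigma> j \<noteq> \<sigma> k" using \<sigma>_inj[of j k] that k by auto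
    ultimately show ?thesis by auto
  qed
  have "defectors (A(root := x, \<sigma> k := x)) = {j \<in> {3..d}. (if j = k then x else A (\<sigma> j)) = Def}"
    unfolding defectors_def using upd by (intro Collect_cong conj_cong) (simp_all del: fun_upd_apply)
  also have "\<dots> = (if x = Def then insert k (defectors A) else defectors A - {k})"
    using k by (auto simp: defectors_def)
  finally have "defectors (A(root := x, \<sigma> k := x))
      = (if x = Def then insert k (defectors A) else defectors A - {k})" .
  moreover have "finite (defectors A)" "k \<in> defectors A \<longleftrightarrow> A (\<sigma> k) = Def"
    using k by (simp_all add: defectors_def)
  ultimately show ?thesis by (auto simp: ND_def card_insert_if)
qed

lemma ND_ipd_update_le:
  assumes "e \<in> E"
  shows "ND (ipd_update A e) \<le> ND A + 1"
proof (cases "e \<in> root_edges")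
  case False
  then have "ND (ipd_update A e) = ND A" using ipd_update_off_root[OF assms False] by (intro ND_cong) auto
  then show ?thesis by simp
next
  case True
  then have "other_end e \<in> \<sigma> ` {1..d}"
    using bij_betw_other_end \<sigma>_bij by (auto simp: bij_betw_def)
  then obtain k where k: "k \<in> {1..d}" "other_end e = \<sigma> k" by blast
  have e: "ipd_update A e = ipd_update A (root, \<sigma> k)"
    using ipd_update_root_edge[OF True] k by simp
  show ?thesis
  proof (cases "k \<in> {1, 2}")
    case True then show ?thesis unfolding e ipd_update_eq by (simp add: ND_update_external)
  next
    case False then have "k \<in> {3..d}" using k by auto
    then show ?thesis unfolding e ipd_update_eq by (auto simp: ND_update_leaf)
  qed
qed

lemma sum_leaves_split:
  "(\<Sum>k\<in>{1..d}. T k) = T 1 + T 2 + (\<Sum>k\<in>defectors A. T k) + (\<Sum>k\<in>cooperators A. T k)"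
proof -
  have externals: "{1..d} = {1, 2} \<union> {3..d}" using three_le_d by auto
  have leaves: "{3..d} = defectors A \<union> cooperators A" by (auto simp: defectors_def cooperators_def)
  have "(\<Sum>k\<in>{1..d}. T k) = (\<Sum>k\<in>{1, 2}. T k) + (\<Sum>k\<in>{3..d}. T k)"
    unfolding externals by (rule sum.union_disjoint) auto
  also have "(\<Sum>k\<in>{3..d}. T k) = (\<Sum>k\<in>defectors A. T k) + (\<Sum>k\<in>cooperators A. T k)"
    unfolding leaves by (rule sum.union_disjoint) (auto simp: defectors_def cooperators_def)
  finally show ?thesis by (simp add: add.assoc)
qed

lemma sum_root_updates_Def:
  assumes "A root = Def"
  shows "(\<Sum>k\<in>{1..d}. f (ND (ipd_update A (root, \<sigma> k))) (ipd_update A (root, \<sigma> k) root))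
    = f (ND A) (if A (\<sigma> 1) = Def then Cop else Def) + f (ND A) (if A (\<sigma> 2) = Def then Cop else Def)
      + real (ND A) * f (ND A - 1) Cop + real (d - 2 - ND A) * f (ND A + 1) Def"
proof -
  have "(\<Sum>k\<in>defectors A. f (ND (ipd_update A (root, \<sigma> k))) (ipd_update A (root, \<sigma> k) root))
      = (\<Sum>k\<in>defectors A. f (ND A - 1) Cop)"
    by (rule sum.cong) (auto simp: defectors_def ipd_update_eq ND_update_leaf assms)
  moreover have "(\<Sum>k\<in>cooperators A. f (ND (ipd_update A (root, \<sigma> k))) (ipd_update A (root, \<sigma> k) root))
      = (\<Sum>k\<in>cooperators A. f (ND A + 1) Def)"
    by (rule sum.cong) (auto simp: cooperators_def ipd_update_eq ND_update_leaf assms)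
  ultimately show ?thesis
    unfolding sum_leaves_split[where A = A] using assms
    by (simp add: ipd_update_eq ND_update_external card_cooperators flip: ND_def)
qed

lemma sum_root_updates_Cop:
  assumes "A root = Cop"
  shows "(\<Sum>k\<in>{1..d}. f (ND (ipd_update A (root, \<sigma> k))) (ipd_update A (root, \<sigma> k) root))
    = f (ND A) (if A (\<sigma> 1) = Cop then Cop else Def) + f (ND A) (if A (\<sigma> 2) = Cop then Cop else Def)
      + real (ND A) * f (ND A) Def + real (d - 2 - ND A) * f (ND A) Cop"
proof -
  have "(\<Sum>k\<in>defectors A. f (ND (ipd_update A (root, \<sigma> k))) (ipd_update A (root, \<sigma> k) root))
      = (\<Sum>k\<in>defectors A. f (ND A) Def)"
    by (rule sum.cong) (auto simp: defectors_def ipd_update_eq ND_update_leaf assms)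
  moreover have "(\<Sum>k\<in>cooperators A. f (ND (ipd_update A (root, \<sigma> k))) (ipd_update A (root, \<sigma> k) root))
      = (\<Sum>k\<in>cooperators A. f (ND A) Cop)"
    by (rule sum.cong) (auto simp: cooperators_def ipd_update_eq ND_update_leaf assms act_not_Def)
  ultimately show ?thesis
    unfolding sum_leaves_split[where A = A] using assms
    by (simp add: ipd_update_eq ND_update_external card_cooperators flip: ND_def)
qed

(* Where the constants come from: a ring at a defecting inner leaf under a defecting root lowers
   N_D and makes the root cooperate (factor 17/16 * 4/3 on up_potential), a ring at a cooperating
   inner leaf raises N_D (factor 3/4); for d = 3 g2 + 6 this leaves a loss of g0/17 per unit time
   inside the window. *)
definition down_potential :: "nat \<Rightarrow> config \<Rightarrow> real" where
  "down_potential g A = (1/2) ^ (ND A - g)"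

definition up_potential :: "nat \<Rightarrow> config \<Rightarrow> real" where
  "up_potential g A = (if A root = Def then 1 else 17/16) * (4/3) ^ (g - ND A)"

lemma sum_root_updates_down_potential_le:
  assumes d: "d = 3 * g2 + 6" and between: "g0 < ND A" "ND A < g2"
  shows "(\<Sum>k\<in>{1..d}. down_potential g0 (ipd_update A (root, \<sigma> k))) \<le> real d * down_potential g0 A"
proof -
  define N where "N = ND A"
  define q where "q = (1/2 :: real) ^ (N - g0)"
  let ?f = "\<lambda>N (a :: act). (1/2 :: real) ^ (N - g0)"
  have g: "g0 < N" "N < g2" using between by (simp_all add: N_def)
  have rd: "real (d - 2 - N) = real d - 2 - real N" "real (d - Suc (Suc N)) = real d - 2 - real N"
    using ND_le[of A] three_le_d by (simp_all add: N_def)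
  have "(\<Sum>k\<in>{1..d}. down_potential g0 (ipd_update A (root, \<sigma> k))) \<le> real d * q"
  proof (cases "A root")
    case Cop
    have "(\<Sum>k\<in>{1..d}. down_potential g0 (ipd_update A (root, \<sigma> k)))
        = q + q + real N * q + (real d - 2 - real N) * q"
      using sum_root_updates_Cop[where A = A and f = ?f, OF Cop]
      by (simp add: down_potential_def N_def[symmetric] q_def rd)
    then show ?thesis by (simp add: algebra_simps)
  next
    case Def
    have fewer: "(1/2::real) ^ (N - Suc g0) = 2 * q"
    proof -
      have "N - g0 = Suc (N - Suc g0)" using g by simp
      then show ?thesis by (simp add: q_def)
    qed
    have more: "(1/2::real) ^ (Suc N - g0) = q / 2"
    proof -
      have "Suc N - g0 = Suc (N - g0)" using g by simp
      then show ?thesis by (simp add: q_def)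
    qed
    have "(\<Sum>k\<in>{1..d}. down_potential g0 (ipd_update A (root, \<sigma> k)))
        = q + q + real N * (2 * q) + (real d - 2 - real N) * (q / 2)"
      using sum_root_updates_Def[where A = A and f = ?f, OF Def]
      by (simp add: down_potential_def N_def[symmetric] q_def rd fewer more)
    also have "\<dots> = (2 + 2 * real N + (real d - 2 - real N) / 2) * q" by (simp add: field_simps)
    also have "\<dots> \<le> real d * q"
    proof (rule mult_right_mono)
      have "real N + 1 \<le> real g2" using g by simp
      then show "2 + 2 * real N + (real d - 2 - real N) / 2 \<le> real d"
        using d by (simp add: field_simps)
    qed (simp add: q_def)
    finally show ?thesis .
  qed
  then show ?thesis by (simp add: down_potential_def N_def q_def)
qed

lemma sum_root_updates_up_potential_Cop_le:
  assumes "A root = Cop" "g0 \<le> ND A"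
  shows "(\<Sum>k\<in>{1..d}. up_potential g2 (ipd_update A (root, \<sigma> k))) \<le> (real d - real g0 / 17) * up_potential g2 A"
proof -
  define N where "N = ND A"
  define u where "u = (4/3 :: real) ^ (g2 - N)"
  let ?f = "\<lambda>N a. (if a = Def then 1 else 17/16) * (4/3 :: real) ^ (g2 - N)"
  have external: "?f N a \<le> 17/16 * u" for a by (simp add: u_def)
  have rd: "real (d - 2 - N) = real d - 2 - real N" "real (d - Suc (Suc N)) = real d - 2 - real N"
    using ND_le[of A] three_le_d by (simp_all add: N_def)
  have "(\<Sum>k\<in>{1..d}. up_potential g2 (ipd_update A (root, \<sigma> k)))
      = ?f N (if A (\<sigma> 1) = Cop then Cop else Def) + ?f N (if A (\<sigma> 2) = Cop then Cop else Def)
        + real N * u + (real d - 2 - real N) * (17/16 * u)"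
    using sum_root_updates_Cop[where A = A and f = ?f, OF assms(1)]
    by (simp add: up_potential_def N_def[symmetric] u_def rd)
  also have "\<dots> \<le> (17/8 + real N + (real d - 2 - real N) * 17/16) * u"
    using external[of "if A (\<sigma> 1) = Cop then Cop else Def"] external[of "if A (\<sigma> 2) = Cop then Cop else Def"]
    by (simp add: algebra_simps)
  also have "\<dots> \<le> ((real d - real g0 / 17) * (17/16)) * u"
  proof (rule mult_right_mono)
    have "real g0 \<le> real N" using assms(2) by (simp add: N_def)
    then show "17/8 + real N + (real d - 2 - real N) * 17/16 \<le> (real d - real g0 / 17) * (17/16)"
      by (simp add: field_simps)
  qed (simp add: u_def)
  finally show ?thesis using assms(1) by (simp add: up_potential_def u_def N_def algebra_simps)
qed

lemma sum_root_updates_up_potential_Def_le: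
  assumes "A root = Def" and d: "d = 3 * g2 + 6" and between: "g0 < ND A" "ND A < g2"
  shows "(\<Sum>k\<in>{1..d}. up_potential g2 (ipd_update A (root, \<sigma> k))) \<le> (real d - real g0 / 17) * up_potential g2 A"
proof -
  define N where "N = ND A"
  define u where "u = (4/3 :: real) ^ (g2 - N)"
  let ?f = "\<lambda>N a. (if a = Def then 1 else 17/16) * (4/3 :: real) ^ (g2 - N)"
  have g: "g0 < N" "N < g2" using between by (simp_all add: N_def)
  have external: "?f N a \<le> 17/16 * u" for a by (simp add: u_def)
  have rd: "real (d - 2 - N) = real d - 2 - real N" "real (d - Suc (Suc N)) = real d - 2 - real N"
    using ND_le[of A] three_le_d by (simp_all add: N_def)
  have fewer: "(4/3::real) ^ (g2 - (N - Suc 0)) = 4/3 * u"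
  proof -
    have "g2 - (N - Suc 0) = Suc (g2 - N)" using g by simp
    then show ?thesis by (simp add: u_def)
  qed
  have more: "(4/3::real) ^ (g2 - Suc N) = 3/4 * u"
  proof -
    have "g2 - N = Suc (g2 - Suc N)" using g by simp
    then show ?thesis by (simp add: u_def)
  qed
  have "(\<Sum>k\<in>{1..d}. up_potential g2 (ipd_update A (root, \<sigma> k)))
      = ?f N (if A (\<sigma> 1) = Def then Cop else Def) + ?f N (if A (\<sigma> 2) = Def then Cop else Def)
        + real N * (17/16 * (4/3 * u)) + (real d - 2 - real N) * (3/4 * u)"
    using sum_root_updates_Def[where A = A and f = ?f, OF assms(1)]
    by (simp add: up_potential_def N_def[symmetric] rd fewer more)
  also have "\<dots> \<le> (17/8 + real N * 17/12 + (real d - 2 - real N) * 3/4) * u"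
    using external[of "if A (\<sigma> 1) = Def then Cop else Def"] external[of "if A (\<sigma> 2) = Def then Cop else Def"]
    by (simp add: algebra_simps)
  also have "\<dots> \<le> (real d - real g0 / 17) * u"
  proof (rule mult_right_mono)
    have "real N + 1 \<le> real g2" "real g0 + 1 \<le> real N" using g by simp_all
    then show "17/8 + real N * 17/12 + (real d - 2 - real N) * 3/4 \<le> real d - real g0 / 17"
      using d by (simp add: field_simps)
  qed (simp add: u_def)
  finally show ?thesis using assms(1) by (simp add: up_potential_def u_def N_def)
qed

lemma sum_down_potential_le:
  assumes "d = 3 * g2 + 6" "g0 < ND A" "ND A < g2"
  shows "(\<Sum>e\<in>E. down_potential g0 (ipd_update A e)) \<le> real (card E) * down_potential g0 A"
proof -
  have "(\<Sum>e\<in>E. down_potential g0 (ipd_update A e))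
      = real (card E - d) * down_potential g0 A + (\<Sum>k\<in>{1..d}. down_potential g0 (ipd_update A (root, \<sigma> k)))"
    using sum_ipd_update_eq[of "\<lambda>N (a :: act). (1/2 :: real) ^ (N - g0)" A] by (simp add: down_potential_def)
  also have "\<dots> \<le> real (card E - d) * down_potential g0 A + real d * down_potential g0 A"
    using sum_root_updates_down_potential_le[OF assms] by simp
  also have "\<dots> = real (card E) * down_potential g0 A"
    using d_le_card_E by (simp add: of_nat_diff algebra_simps)
  finally show ?thesis .
qed

lemma sum_up_potential_le:
  assumes "d = 3 * g2 + 6" "g0 < ND A" "ND A < g2"
  shows "(\<Sum>e\<in>E. up_potential g2 (ipd_update A e)) \<le> (real (card E) - real g0 / 17) * up_potential g2 A"
proof -
  have "(\<Sum>e\<in>E. up_potential g2 (ipd_update A e))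
      = real (card E - d) * up_potential g2 A + (\<Sum>k\<in>{1..d}. up_potential g2 (ipd_update A (root, \<sigma> k)))"
    using sum_ipd_update_eq[of "\<lambda>N a. (if a = Def then 1 else 17/16) * (4/3 :: real) ^ (g2 - N)" A]
    by (simp add: up_potential_def)
  also have "\<dots> \<le> real (card E - d) * up_potential g2 A + (real d - real g0 / 17) * up_potential g2 A"
    using sum_root_updates_up_potential_Cop_le[of A g0 g2] sum_root_updates_up_potential_Def_le[of A g2 g0] assms
    by (cases "A root") auto
  also have "\<dots> = (real (card E) - real g0 / 17) * up_potential g2 A"
    using d_le_card_E by (simp add: of_nat_diff algebra_simps)
  finally show ?thesis .
qed

lemma one_le_up_potential: "1 \<le> up_potential g A"
proof -
  have power: "1 \<le> (4/3 :: real) ^ (g - ND A)" by (rule one_le_power) simp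
  then have "1 \<le> 17/16 * (4/3 :: real) ^ (g - ND A)" by linarith
  with power show ?thesis by (simp add: up_potential_def)
qed

lemma prob_late_defection_le:
  assumes d: "d = 3 * g2 + 6" and g: "0 < g0" "g0 < g1" "g1 < g2" and A0: "ND A0 = g1"
  shows "measure (ipd_space E) {\<omega> \<in> space (ipd_space E).
           min (hit_time ND g0 (ipd_state A0 \<omega>)) (ennreal t) \<le> hit_time ND g2 (ipd_state A0 \<omega>)}
         \<le> (1/2) ^ (g1 - g0) + 17/16 * (4/3) ^ (g2 - g1) / exp (real g0 / 17 * t)"
proof -
  interpret ipd_exit E ND g0 g2
    by unfold_locales (simp_all add: finite_cat_edges E_nonempty)
  have "measure paths {\<omega> \<in> space paths.
      min (hit_time ND g0 (ipd_state A0 \<omega>)) (ennreal t) \<le> hit_time ND g2 (ipd_state A0 \<omega>)}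
      \<le> down_potential g0 A0 + up_potential g2 A0 / exp (real g0 / 17 * t)"
  proof (rule prob_hit_order_le)
    show "inside A0" using A0 g by (simp add: inside_def)
    show "ND (ipd_update A e) \<le> ND A + 1" if "e \<in> E" for A e
      using that by (rule ND_ipd_update_le)
    show "0 \<le> down_potential g0 A" "1 \<le> up_potential g2 A" for A
      by (simp_all add: down_potential_def one_le_up_potential)
    show "1 \<le> down_potential g0 A" if "ND A \<le> g0" for A
      using that by (simp add: down_potential_def)
    show "(\<Sum>e\<in>E. down_potential g0 (ipd_update A e)) \<le> rate * down_potential g0 A"
      "(\<Sum>e\<in>E. up_potential g2 (ipd_update A e)) \<le> (rate - real g0 / 17) * up_potential g2 A"
      if "inside A" for A
      using that sum_down_potential_le[OF d] sum_up_potential_le[OF d] by (simp_all add: inside_def)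
    show "0 < real g0 / 17" "real g0 / 17 < rate"
      using g d d_le_card_E by simp_all
  qed
  also have "\<dots> \<le> (1/2) ^ (g1 - g0) + 17/16 * (4/3) ^ (g2 - g1) / exp (real g0 / 17 * t)"
    using A0 by (intro add_mono divide_right_mono) (simp_all add: down_potential_def up_potential_def)
  finally show ?thesis by (simp add: ipd_space_eq_paths)
qed

end

lemma card_final_block:
  fixes P :: "nat \<Rightarrow> bool"
  assumes "\<forall>k\<in>{3..d - g}. \<not> P k" "\<forall>k\<in>{d - g + 1..d}. P k" "g + 2 \<le> d"
  shows "card {k \<in> {3..d}. P k} = g"
proof -
  have "{k \<in> {3..d}. P k} = {d - g + 1..d}"
  proof (intro set_eqI iffI)
    fix k assume "k \<in> {k \<in> {3..d}. P k}"
    then have k: "3 \<le> k" "k \<le> d" "P k" by auto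
    show "k \<in> {d - g + 1..d}"
    proof (rule ccontr)
      assume "k \<notin> {d - g + 1..d}"
      then have "k \<in> {3..d - g}" using k by auto
      then show False using assms(1) k(3) by blast
    qed
  next
    fix k assume "k \<in> {d - g + 1..d}"
    then show "k \<in> {k \<in> {3..d}. P k}" using assms(2,3) by auto
  qed
  then show ?thesis using assms(3) by simp
qed

lemma one_half_power_eq_two_powr:
  assumes "g0 \<le> g1"
  shows "(1/2 :: real) ^ (g1 - g0) = 2 powr (- (real g1 - real g0))"
proof -
  have "(1/2 :: real) ^ (g1 - g0) = 1 / 2 powr real (g1 - g0)"
    by (simp add: power_one_over powr_realpow)
  also have "\<dots> = 2 powr (- real (g1 - g0))"
    by (rule powr_minus_divide[symmetric])
  also have "\<dots> = 2 powr (- (real g1 - real g0))"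
    using assms by (simp add: of_nat_diff)
  finally show ?thesis .
qed

lemma rho_powr_eq_exp: "sqrt (9/8) powr (- s / 2) = exp (- s * ln (9/8) / 4)"
  by (simp add: powr_def ln_sqrt)

lemma exp_decay_le_rho_powr:
  fixes s :: real
  assumes "8 \<le> s"
  shows "17/16 * exp (- s\<^sup>2 / 17) \<le> sqrt (9/8) powr (- s / 2)"
proof -
  have "ln (17/16 :: real) \<le> 1/16" using ln_le_minus_one[of "17/16 :: real"] by simp
  moreover have "s * ln (9/8) \<le> s * (1/8)"
    using ln_le_minus_one[of "9/8 :: real"] assms by (intro mult_left_mono) simp_all
  moreover have "8 * s \<le> s\<^sup>2" using assms by (simp add: power2_eq_square mult_right_mono)
  ultimately have key: "ln (17/16) + - s\<^sup>2 / 17 \<le> - s * ln (9/8) / 4" using assms by linarith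
  have "17/16 * exp (- s\<^sup>2 / 17) = exp (ln (17/16) + - s\<^sup>2 / 17)"
    by (subst exp_add) simp
  also have "\<dots> \<le> exp (- s * ln (9/8) / 4)" using key by simp
  also have "\<dots> = sqrt (9/8) powr (- s / 2)" by (rule rho_powr_eq_exp[symmetric])
  finally show ?thesis .
qed

lemma rho_powr_small_imp_large:
  fixes s :: real
  assumes "1 \<le> k" "sqrt (9/8) powr (- s / 2) * sqrt 2 ^ k < 1"
  shows "8 \<le> s"
proof -
  define r where "r = exp (- s * ln (9/8) / 4)"
  have "sqrt 2 \<le> sqrt (2 :: real) ^ k"
    using power_increasing[OF assms(1), of "sqrt 2"] by simp
  then have "r * sqrt 2 \<le> r * sqrt 2 ^ k" by (rule mult_left_mono) (simp add: r_def)
  also have "\<dots> < 1" using assms(2) unfolding r_def rho_powr_eq_exp .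
  finally have "ln (r * sqrt 2) < 0" by (simp add: r_def)
  then have "- s * ln (9/8) / 4 + ln 2 / 2 < 0" by (simp add: r_def ln_mult ln_sqrt)
  moreover have "1/2 \<le> ln (2 :: real)" using ln_le_minus_one[of "1/2 :: real"] by (simp add: ln_div)
  ultimately have large: "1 < s * ln (9/8)" by linarith
  have L: "0 < ln (9/8 :: real)" "ln (9/8 :: real) \<le> 1/8"
    using ln_le_minus_one[of "9/8 :: real"] by simp_all
  have "0 < s"
  proof (rule ccontr)
    assume "\<not> 0 < s"
    then have "s * ln (9/8) \<le> 0" using L(1) by (simp add: mult_nonpos_nonneg)
    then show False using large by simp
  qed
  then have "s * ln (9/8) \<le> s * (1/8)" using L(2) by (intro mult_left_mono) simp_all
  then show ?thesis using large by linarith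
qed

lemma weaken_defection_bound:
  fixes g0 g1 g2 :: nat and t p :: real
  assumes g: "0 < g0" "g0 < g1" "g1 < g2" and t: "0 < t" and p: "p \<le> 1"
    and p_le: "p \<le> (1/2) ^ (g1 - g0) + 17/16 * (4/3) ^ (g2 - g1) / exp (real g0 / 17 * t)"
  shows "p \<le> 2 powr (- (real g1 - real g0))
            + sqrt (9/8) powr (- sqrt (real g0 * t) / 2) * sqrt 2 powr (real g2 - real g1)
            + 2 powr (- (real g0 * t) / 2)"
proof -
  define s where "s = sqrt (real g0 * t)"
  define Q where "Q = sqrt (9/8) powr (- s / 2) * sqrt 2 ^ (g2 - g1)"
  have s_sq: "s\<^sup>2 = real g0 * t" using g t by (simp add: s_def)
  have "sqrt 2 powr (real g2 - real g1) = sqrt 2 powr real (g2 - g1)"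
    using g by (simp add: of_nat_diff)
  also have "\<dots> = sqrt 2 ^ (g2 - g1)" by (rule powr_realpow) simp
  finally have Q_eq: "sqrt (9/8) powr (- s / 2) * sqrt 2 powr (real g2 - real g1) = Q"
    by (simp add: Q_def)
  have "(1/2) ^ (g1 - g0) + Q \<le> 2 powr (- (real g1 - real g0)) + Q + 2 powr (- (real g0 * t) / 2)"
    using g by (simp add: one_half_power_eq_two_powr)
  moreover have "p \<le> (1/2) ^ (g1 - g0) + Q"
  proof (cases "1 \<le> Q")
    case True
    then show ?thesis using p by (simp add: add_increasing)
  next
    case False
    then have "8 \<le> s"
      using g by (intro rho_powr_small_imp_large[where k = "g2 - g1"]) (simp_all add: Q_def)
    have "17/16 * (4/3) ^ (g2 - g1) / exp (real g0 / 17 * t)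
        = 17/16 * exp (- s\<^sup>2 / 17) * (4/3) ^ (g2 - g1)"
      by (simp add: s_sq exp_minus field_simps)
    also have "\<dots> \<le> Q"
      unfolding Q_def
    proof (rule mult_mono)
      show "17/16 * exp (- s\<^sup>2 / 17) \<le> sqrt (9/8) powr (- s / 2)"
        using \<open>8 \<le> s\<close> by (rule exp_decay_le_rho_powr)
      show "(4/3 :: real) ^ (g2 - g1) \<le> sqrt 2 ^ (g2 - g1)"
        by (intro power_mono real_le_rsqrt) (simp_all add: power2_eq_square)
    qed simp_all
    finally show ?thesis using p_le by simp
  qed
  ultimately show ?thesis unfolding s_def Q_eq[unfolded s_def] by linarith
qed

theorem mainTheorem3:
  fixes n d i g0 g1 g2 :: nat and \<sigma> :: "nat \<Rightarrow> vert" and A0 :: config and M' :: real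
  assumes "d > 15" and "1 \<le> n" and "i < n"
    and "bij_betw \<sigma> {1..d} (nbrs (cat_edges n d) (i, 0))"
    and "{v \<in> nbrs (cat_edges n d) (i, 0). snd v = 0} \<subseteq> {\<sigma> 1, \<sigma> 2}"
    and "1 < g0" and "g0 < g1" and "g1 < g2" and "real g2 = real d / 3 - 2"
    and "M' > 0"
    and "\<forall>k\<in>{3..d - g1}. A0 (\<sigma> k) = Cop"
    and "\<forall>k\<in>{d - g1 + 1..d}. A0 (\<sigma> k) = Def"
  shows "let E = cat_edges n d;
             ND = (\<lambda>A. card {k \<in> {3..d}. A (\<sigma> k) = Def});
             T = (\<lambda>g \<omega>. hit_time ND g (ipd_state A0 \<omega>));
             \<Delta>2 = real g2 - real g1; \<Delta>1 = real g1 - real g0;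
             \<rho> = sqrt (9 / 8); \<mu> = real g0 * M'
         in measure (ipd_space E) {\<omega> \<in> space (ipd_space E). T g2 \<omega> \<ge> min (T g0 \<omega>) (ennreal M')}
            \<le> 2 powr (- \<Delta>1) + \<rho> powr (- sqrt \<mu> / 2) * sqrt 2 powr \<Delta>2 + 2 powr (- \<mu> / 2)"
proof -
  interpret caterpillar_star n d i \<sigma>
    using assms(1,4,5) by unfold_locales auto
  interpret ipd_clock E
    by unfold_locales (simp_all add: finite_cat_edges E_nonempty)
  have d: "d = 3 * g2 + 6"
  proof -
    have "real d = real (3 * g2 + 6)" using assms(9) by simp
    then show ?thesis by (simp only: of_nat_eq_iff)
  qed
  have ND_eq: "(\<lambda>A. card {k \<in> {3..d}. A (\<sigma> k) = Def}) = ND"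
    by (simp add: fun_eq_iff ND_def defectors_def)
  have A0: "ND A0 = g1"
    unfolding ND_def defectors_def using assms(8,11,12) d by (intro card_final_block) auto
  let ?late = "{\<omega> \<in> space (ipd_space E).
      min (hit_time ND g0 (ipd_state A0 \<omega>)) (ennreal M') \<le> hit_time ND g2 (ipd_state A0 \<omega>)}"
  have "measure (ipd_space E) ?late \<le> (1/2) ^ (g1 - g0) + 17/16 * (4/3) ^ (g2 - g1) / exp (real g0 / 17 * M')"
    using assms(6-8) by (intro prob_late_defection_le[OF d _ _ _ A0]) auto
  moreover have "measure (ipd_space E) ?late \<le> 1"
    unfolding ipd_space_eq_paths by (rule paths.prob_le_1)
  ultimately show ?thesis
    unfolding Let_def ND_eq using assms(6-8,10) by (intro weaken_defection_bound) auto
qed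

end
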